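(* Let $X$ be a real Banach space with a normalized Schauder basis $(e_j)$ which is $(C_u,C_s)$-subsymmetric, and let $(e_j^* )$ be the biorthogonal functionals. Let $T\colon X\to X$ be a bounded linear operator with $\delta:=\inf_j|\langle Te_j,e_j^*\rangle|>0$. Then for every $\eta>0$ there exist bounded linear operators $A,B\colon X\to X$ with $I_X=ATB$ and $$\|A\|\cdot\|B\|\leq \frac{2C_u^5C_s^3}{\delta}+\eta.$$ In other words, $(e_j)$ has the $\bigl(\tfrac{2C_u^5C_s^3}{\delta}\bigr)$-factorization property.
   Context: $(e_j)$ is $C_u$-unconditional if for all scalar sequences $(a_j),(\gamma_j)$ for which the series converge, $\|\sum_j\gamma_ja_je_j\|\le C_u\sup_k|\gamma_k|\,\|\sum_ja_je_j\|$. It is $C_s$-spreading if for every increasing sequence $(n_j)$ of natural numbers and all scalars $(a_j)$ for which the series converge, $C_s^{-1}\|\sum_ja_je_{n_j}\|\le\|\sum_ja_je_j\|\le C_s\|\sum_ja_je_{n_j}\|$. It is $(C_u,C_s)$-subsymmetric if it is both $C_u$-unconditional and $C_s$-spreading. $I_X$ denotes the identity operator on $X$. *)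

theory Defs
  imports "HOL-Analysis.Analysis"
begin

definition schauder_basis :: "(nat \<Rightarrow> 'a::banach) \<Rightarrow> bool" where
  "schauder_basis e \<longleftrightarrow> (\<forall>x. \<exists>!a::nat \<Rightarrow> real. (\<lambda>j. a j *\<^sub>R e j) sums x)"

definition biorth :: "(nat \<Rightarrow> 'a::banach) \<Rightarrow> nat \<Rightarrow> 'a \<Rightarrow> real" where
  "biorth e j x = (THE a::nat \<Rightarrow> real. (\<lambda>i. a i *\<^sub>R e i) sums x) j"

definition normalized :: "(nat \<Rightarrow> 'a::real_normed_vector) \<Rightarrow> bool" where
  "normalized e \<longleftrightarrow> (\<forall>j. norm (e j) = 1)"

definition unconditional :: "real \<Rightarrow> (nat \<Rightarrow> 'a::banach) \<Rightarrow> bool" where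
  "unconditional Cu e \<longleftrightarrow>
     (\<forall>(a::nat \<Rightarrow> real) (\<gamma>::nat \<Rightarrow> real).
        summable (\<lambda>j. a j *\<^sub>R e j) \<longrightarrow> summable (\<lambda>j. (\<gamma> j * a j) *\<^sub>R e j) \<longrightarrow>
        bdd_above (range (\<lambda>k. \<bar>\<gamma> k\<bar>)) \<longrightarrow>
        norm (\<Sum>j. (\<gamma> j * a j) *\<^sub>R e j)
          \<le> Cu * (SUP k. \<bar>\<gamma> k\<bar>) * norm (\<Sum>j. a j *\<^sub>R e j))"

definition spreading :: "real \<Rightarrow> (nat \<Rightarrow> 'a::banach) \<Rightarrow> bool" where
  "spreading Cs e \<longleftrightarrow>
     (\<forall>(n::nat \<Rightarrow> nat) (a::nat \<Rightarrow> real).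
        strict_mono n \<longrightarrow> summable (\<lambda>j. a j *\<^sub>R e j) \<longrightarrow> summable (\<lambda>j. a j *\<^sub>R e (n j)) \<longrightarrow>
        inverse Cs * norm (\<Sum>j. a j *\<^sub>R e (n j)) \<le> norm (\<Sum>j. a j *\<^sub>R e j) \<and>
        norm (\<Sum>j. a j *\<^sub>R e j) \<le> Cs * norm (\<Sum>j. a j *\<^sub>R e (n j)))"

definition subsymmetric :: "real \<Rightarrow> real \<Rightarrow> (nat \<Rightarrow> 'a::banach) \<Rightarrow> bool" where
  "subsymmetric Cu Cs e \<longleftrightarrow> unconditional Cu e \<and> spreading Cs e"

end

theory Submission
  imports Defs "HOL-Library.Diagonal_Subsequence"
begin

text \<open>
  The matrix m i k = biorth e i (T (e k)) is bounded and its columns tend to zero. A gliding hump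
  argument extracts strictly increasing sequences a and b for which the matrix
  M i j = biorth e (b i) (T (e (a j) - e (b j))) is almost diagonal: |M i i| \<ge> \<delta> - \<epsilon> and
  |M i j| \<le> \<epsilon> / 2^(i+j) for i \<noteq> j. The operator B x = \<Sum>j. biorth e j x *R (e (a j) - e (b j))
  has norm at most 2 Cs by spreading, and A0 y = \<Sum>i. (biorth e (b i) y / M i i) *R e i has norm
  at most Cu^2 Cs / (\<delta> - \<epsilon>) by spreading and unconditionality. Coordinatewise, A0 T B differs
  from the identity only through the off-diagonal entries of M, so it is within
  4 Cu \<epsilon> / (\<delta> - \<epsilon>) of the identity, and a Neumann series corrects A0 to an exact left inverse
  of T B. Letting \<epsilon> tend to 0 gives the bound 2 Cu^2 Cs^2 / \<delta> + \<eta>, which implies the stated one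
  because Cu, Cs \<ge> 1.
\<close>

section \<open>Series and bounded operators\<close>

lemma summable_if_block_sums_dominated:
  fixes f :: "nat \<Rightarrow> 'a::banach" and g :: "nat \<Rightarrow> 'b::banach"
  assumes dominated: "\<And>m n. norm (sum f {m..<n}) \<le> K * norm (sum g {m..<n})"
    and "summable g"
  shows "summable f"
  unfolding summable_Cauchy
proof (intro allI impI)
  fix \<epsilon> :: real assume "\<epsilon> > 0"
  then have "\<epsilon> / (\<bar>K\<bar> + 1) > 0" by simp
  then obtain N where N: "\<forall>m\<ge>N. \<forall>n. norm (sum g {m..<n}) < \<epsilon> / (\<bar>K\<bar> + 1)"
    using \<open>summable g\<close> unfolding summable_Cauchy by blast
  have "norm (sum f {m..<n}) < \<epsilon>" if "m \<ge> N" for m n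
  proof -
    have "norm (sum f {m..<n}) \<le> \<bar>K\<bar> * norm (sum g {m..<n})"
      using dominated[of m n] by (meson abs_ge_self mult_right_mono norm_ge_zero order_trans)
    also have "\<dots> \<le> \<bar>K\<bar> * (\<epsilon> / (\<bar>K\<bar> + 1))"
      using N that by (intro mult_left_mono) (auto intro: less_imp_le)
    also have "\<dots> < \<epsilon>"
      using \<open>\<epsilon> > 0\<close> by (simp add: field_simps)
    finally show ?thesis .
  qed
  then show "\<exists>N. \<forall>m\<ge>N. \<forall>n. norm (sum f {m..<n}) < \<epsilon>" by blast
qed

lemma sums_restrict_atLeastLessThan:
  fixes v :: "nat \<Rightarrow> 'a::real_normed_vector"
  shows "(\<lambda>j. (if j \<in> {m..<n} then a j else 0) *\<^sub>R v j) sums (\<Sum>j\<in>{m..<n}. a j *\<^sub>R v j)"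
proof -
  have "(\<lambda>j. (if j \<in> {m..<n} then a j else 0) *\<^sub>R v j) = (\<lambda>j. if j \<in> {m..<n} then a j *\<^sub>R v j else 0)"
    by auto
  then show ?thesis using sums_If_finite_set[of "{m..<n}" "\<lambda>j. a j *\<^sub>R v j"] by simp
qed

lemma bounded_linear_series:
  fixes f :: "nat \<Rightarrow> 'a::real_normed_vector \<Rightarrow> real" and v :: "nat \<Rightarrow> 'b::banach"
  assumes "\<And>j. linear (f j)" and "\<And>x. summable (\<lambda>j. f j x *\<^sub>R v j)"
    and "\<And>x. norm (\<Sum>j. f j x *\<^sub>R v j) \<le> K * norm x"
  shows "bounded_linear (\<lambda>x. \<Sum>j. f j x *\<^sub>R v j)"
proof (rule bounded_linear_intro[where K = K])
  fix x y
  show "(\<Sum>j. f j (x + y) *\<^sub>R v j) = (\<Sum>j. f j x *\<^sub>R v j) + (\<Sum>j. f j y *\<^sub>R v j)"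
    using assms(1) by (simp add: linear_add scaleR_add_left suminf_add[OF assms(2) assms(2)])
next
  fix r x
  show "(\<Sum>j. f j (r *\<^sub>R x) *\<^sub>R v j) = r *\<^sub>R (\<Sum>j. f j x *\<^sub>R v j)"
    using assms(1) suminf_scaleR_right[OF assms(2)[of x], of r] by (simp add: linear_scale)
next
  fix x
  show "norm (\<Sum>j. f j x *\<^sub>R v j) \<le> norm x * K"
    using assms(3)[of x] by (simp add: mult.commute)
qed

lemma norm_funpow_le:
  fixes E :: "'a::real_normed_vector \<Rightarrow> 'a"
  assumes "\<And>x. norm (E x) \<le> q * norm x" and "0 \<le> q"
  shows "norm ((E ^^ n) x) \<le> q ^ n * norm x"
proof (induction n)
  case (Suc n)
  have "norm ((E ^^ Suc n) x) \<le> q * norm ((E ^^ n) x)"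
    using assms(1)[of "(E ^^ n) x"] by simp
  also have "\<dots> \<le> q * (q ^ n * norm x)"
    using Suc \<open>0 \<le> q\<close> by (rule mult_left_mono)
  finally show ?case by simp
qed simp

lemma suminf_funpow_telescope:
  fixes E :: "'a::real_normed_vector \<Rightarrow> 'a"
  assumes "linear E" and "(\<lambda>n. (E ^^ n) y) \<longlonglongrightarrow> 0"
  shows "(\<Sum>n. (E ^^ n) (y - E y)) = y"
proof -
  have "linear (E ^^ n)" for n
    using \<open>linear E\<close> by (induction n) (auto simp: linear_iff)
  then have "(E ^^ n) (y - E y) = (E ^^ n) y - (E ^^ Suc n) y" for n
    by (simp add: linear_diff funpow_Suc_right del: funpow.simps)
  moreover have "(\<lambda>n. (E ^^ n) y - (E ^^ Suc n) y) sums y"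
    using telescope_sums'[OF assms(2)] by simp
  ultimately show ?thesis
    by (simp add: sums_iff)
qed

lemma neumann_series:
  fixes E :: "'a::banach \<Rightarrow> 'a"
  assumes E: "bounded_linear E" and contraction: "\<And>x. norm (E x) \<le> q * norm x"
    and "0 \<le> q" and "q < 1"
  shows "bounded_linear (\<lambda>y. \<Sum>n. (E ^^ n) y)"
    and "onorm (\<lambda>y. \<Sum>n. (E ^^ n) y) \<le> 1 / (1 - q)"
    and "(\<Sum>n. (E ^^ n) (y - E y)) = y"
proof -
  have powers: "bounded_linear (E ^^ n)" for n
    by (induction n) (auto intro: bounded_linear_compose[OF E] bounded_linear_ident simp: id_def)
  have norm_powers: "norm ((E ^^ n) x) \<le> q ^ n * norm x" for n x
    using contraction \<open>0 \<le> q\<close> by (rule norm_funpow_le)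
  have geometric: "summable (\<lambda>n. q ^ n * norm x)" for x
    using \<open>0 \<le> q\<close> \<open>q < 1\<close> by (intro summable_mult2 summable_geometric) simp
  have summable: "summable (\<lambda>n. (E ^^ n) x)" for x
    by (rule summable_comparison_test'[OF geometric norm_powers])
  have norm_sum: "norm (\<Sum>n. (E ^^ n) y) \<le> 1 / (1 - q) * norm y" for y
  proof -
    have "norm (\<Sum>n. (E ^^ n) y) \<le> (\<Sum>n. q ^ n * norm y)"
      by (rule norm_suminf_le[OF norm_powers geometric])
    also have "\<dots> = 1 / (1 - q) * norm y"
      using \<open>0 \<le> q\<close> \<open>q < 1\<close> by (simp add: suminf_mult2[symmetric] summable_geometric suminf_geometric)
    finally show ?thesis .
  qed
  show "bounded_linear (\<lambda>y. \<Sum>n. (E ^^ n) y)"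
  proof (rule bounded_linear_intro[where K = "1 / (1 - q)"])
    show "(\<Sum>n. (E ^^ n) (x + y)) = (\<Sum>n. (E ^^ n) x) + (\<Sum>n. (E ^^ n) y)" for x y
      using powers by (simp add: linear_simps suminf_add[OF summable summable])
    show "(\<Sum>n. (E ^^ n) (r *\<^sub>R x)) = r *\<^sub>R (\<Sum>n. (E ^^ n) x)" for r x
      using powers by (simp add: linear_simps suminf_scaleR_right[OF summable])
    show "norm (\<Sum>n. (E ^^ n) x) \<le> norm x * (1 / (1 - q))" for x
      using norm_sum[of x] by (simp add: mult.commute)
  qed
  show "onorm (\<lambda>y. \<Sum>n. (E ^^ n) y) \<le> 1 / (1 - q)"
    by (rule onorm_bound) (use \<open>q < 1\<close> norm_sum in auto)
  have "(\<lambda>n. (E ^^ n) y) \<longlonglongrightarrow> 0"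
  proof (rule Lim_null_comparison)
    show "\<forall>\<^sub>F n in sequentially. norm ((E ^^ n) y) \<le> q ^ n * norm y"
      using norm_powers by simp
    show "(\<lambda>n. q ^ n * norm y) \<longlonglongrightarrow> 0"
      using \<open>0 \<le> q\<close> \<open>q < 1\<close> by (intro tendsto_mult_left_zero LIMSEQ_power_zero) simp
  qed
  then show "(\<Sum>n. (E ^^ n) (y - E y)) = y"
    by (rule suminf_funpow_telescope[OF bounded_linear.linear[OF E]])
qed

lemma factor_id_through_near_id:
  fixes A\<^sub>0 :: "'c::real_normed_vector \<Rightarrow> 'a::banach" and T :: "'b::real_normed_vector \<Rightarrow> 'c"
    and B :: "'a \<Rightarrow> 'b"
  assumes A\<^sub>0: "bounded_linear A\<^sub>0" and T: "bounded_linear T" and B: "bounded_linear B"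
    and near_id: "\<And>x. norm (A\<^sub>0 (T (B x)) - x) \<le> q * norm x" and "0 \<le> q" and "q < 1"
  shows "\<exists>A. bounded_linear A \<and> (\<forall>x. A (T (B x)) = x) \<and> onorm A \<le> onorm A\<^sub>0 / (1 - q)"
proof -
  define E where "E x = x - A\<^sub>0 (T (B x))" for x
  define S where "S y = (\<Sum>n. (E ^^ n) y)" for y
  have "bounded_linear E"
    unfolding E_def using bounded_linear_compose[OF A\<^sub>0 bounded_linear_compose[OF T B]]
    by (intro bounded_linear_sub bounded_linear_ident)
  moreover have "norm (E x) \<le> q * norm x" for x
    using near_id[of x] by (simp add: E_def norm_minus_commute)
  ultimately have S: "bounded_linear S" and "onorm S \<le> 1 / (1 - q)" and "S (x - E x) = x" for x
    unfolding S_def using neumann_series \<open>0 \<le> q\<close> \<open>q < 1\<close> by blast+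
  then have "S (A\<^sub>0 (T (B x))) = x" for x
    by (simp add: E_def)
  moreover have "onorm (\<lambda>y. S (A\<^sub>0 y)) \<le> onorm A\<^sub>0 / (1 - q)"
  proof -
    have "onorm (\<lambda>y. S (A\<^sub>0 y)) \<le> onorm S * onorm A\<^sub>0"
      using onorm_compose[OF S A\<^sub>0] by (simp add: o_def)
    also have "\<dots> \<le> 1 / (1 - q) * onorm A\<^sub>0"
      using \<open>onorm S \<le> 1 / (1 - q)\<close> onorm_pos_le[OF A\<^sub>0] by (rule mult_right_mono)
    finally show ?thesis
      by simp
  qed
  moreover have "bounded_linear (\<lambda>y. S (A\<^sub>0 y))"
    using S A\<^sub>0 by (rule bounded_linear_compose)
  ultimately show ?thesis
    by blast
qed

lemma ex_pos_perturbed_divide_less: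
  fixes K c \<delta> \<eta> :: real
  assumes "0 < \<delta>" and "0 < \<eta>"
  shows "\<exists>\<epsilon>>0. c * \<epsilon> < \<delta> \<and> K / (\<delta> - c * \<epsilon>) < K / \<delta> + \<eta>"
proof -
  have D: "((\<lambda>\<epsilon>. \<delta> - c * \<epsilon>) \<longlongrightarrow> \<delta>) (at_right 0)"
    by (auto intro!: tendsto_eq_intros)
  then have "((\<lambda>\<epsilon>. K / (\<delta> - c * \<epsilon>)) \<longlongrightarrow> K / \<delta>) (at_right 0)"
    using \<open>0 < \<delta>\<close> by (intro tendsto_divide tendsto_const) auto
  then have "\<forall>\<^sub>F \<epsilon> in at_right 0. K / (\<delta> - c * \<epsilon>) < K / \<delta> + \<eta>"
    using \<open>0 < \<eta>\<close> by (intro order_tendstoD(2)) auto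
  moreover have "\<forall>\<^sub>F \<epsilon> in at_right 0. 0 < \<delta> - c * \<epsilon>"
    using D \<open>0 < \<delta>\<close> by (rule order_tendstoD(1))
  ultimately have "\<forall>\<^sub>F \<epsilon> in at_right 0. 0 < \<epsilon> \<and> 0 < \<delta> - c * \<epsilon> \<and> K / (\<delta> - c * \<epsilon>) < K / \<delta> + \<eta>"
    using eventually_at_right_less by (intro eventually_conj)
  then show ?thesis
    by (auto dest!: eventually_happens'[OF trivial_limit_at_right_real])
qed

section \<open>A gliding hump argument\<close>

lemma diagonal_subseq_rows_convergent:
  fixes m :: "nat \<Rightarrow> nat \<Rightarrow> real"
  assumes bounded: "\<And>i k. \<bar>m i k\<bar> \<le> K"
  shows "\<exists>\<sigma>. strict_mono \<sigma> \<and> (\<forall>r. convergent (\<lambda>k. m r (\<sigma> k)))"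
proof -
  interpret subseqs "\<lambda>n s. convergent (\<lambda>k. m n (s k))"
  proof
    fix n and s :: "nat \<Rightarrow> nat"
    have "bounded (range (\<lambda>k. m n (s k)))"
      using bounded by (auto simp: bounded_iff intro!: exI[of _ K])
    then obtain l r where "strict_mono (r :: nat \<Rightarrow> nat)" "((\<lambda>k. m n (s k)) \<circ> r) \<longlonglongrightarrow> l"
      using bounded_imp_convergent_subsequence by blast
    then show "\<exists>r. strict_mono r \<and> convergent (\<lambda>k. m n ((s \<circ> r) k))"
      by (auto simp: convergent_def o_def)
  qed
  have "convergent (\<lambda>k. m r (diagseq k))" for r
  proof -
    have "convergent (\<lambda>k. m r ((diagseq \<circ> (+) (Suc r)) k))"
    proof (rule diagseq_holds)
      fix s t :: "nat \<Rightarrow> nat" and n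
      assume "strict_mono t" "convergent (\<lambda>k. m n (s k))"
      then show "convergent (\<lambda>k. m n ((s \<circ> t) k))"
        unfolding convergent_def using LIMSEQ_subseq_LIMSEQ[of "\<lambda>k. m n (s k)" _ t]
        by (auto simp: o_def)
    qed
    then obtain l where "(\<lambda>k. m r (diagseq (k + Suc r))) \<longlonglongrightarrow> l"
      by (auto simp: convergent_def o_def add.commute)
    then have "(\<lambda>k. m r (diagseq k)) \<longlonglongrightarrow> l"
      by (rule LIMSEQ_offset)
    then show ?thesis
      by (auto simp: convergent_def)
  qed
  then show ?thesis using subseq_diagseq by blast
qed

lemma gliding_hump_step:
  fixes m :: "nat \<Rightarrow> nat \<Rightarrow> real"
  assumes "strict_mono \<sigma>" and rows: "\<And>r. convergent (\<lambda>k. m r (\<sigma> k))"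
    and columns: "\<And>k. (\<lambda>i. m i k) \<longlonglongrightarrow> 0" and "\<tau> > 0"
  shows "\<exists>x y. L < x \<and> x < y \<and> (\<forall>r\<le>L. \<bar>m r x - m r y\<bar> \<le> \<tau>) \<and> (\<forall>c\<le>x. \<bar>m y c\<bar> \<le> \<tau>)"
proof -
  define l where "l r = lim (\<lambda>k. m r (\<sigma> k))" for r
  have l: "(\<lambda>k. m r (\<sigma> k)) \<longlonglongrightarrow> l r" for r
    using rows unfolding l_def by (simp add: convergent_LIMSEQ_iff)
  have near_limits: "\<forall>\<^sub>F k in sequentially. \<forall>r\<in>{..L}. \<bar>m r (\<sigma> k) - l r\<bar> < \<tau> / 2"
  proof (intro eventually_ball_finite ballI)
    show "\<forall>\<^sub>F k in sequentially. \<bar>m r (\<sigma> k) - l r\<bar> < \<tau> / 2" for r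
      using tendstoD[OF l[of r], of "\<tau> / 2"] \<open>\<tau> > 0\<close> by (simp add: dist_real_def)
  qed simp
  have "\<forall>\<^sub>F k in sequentially. L < \<sigma> k"
    using \<open>strict_mono \<sigma>\<close> eventually_gt_at_top by (rule eventually_subseq)
  with near_limits
  have "\<forall>\<^sub>F k in sequentially. (\<forall>r\<in>{..L}. \<bar>m r (\<sigma> k) - l r\<bar> < \<tau> / 2) \<and> L < \<sigma> k"
    by (rule eventually_conj)
  then obtain k0 where k0: "\<forall>r\<le>L. \<bar>m r (\<sigma> k0) - l r\<bar> < \<tau> / 2" "L < \<sigma> k0"
    by (auto dest!: eventually_happens'[OF sequentially_bot])
  have "\<forall>\<^sub>F i in sequentially. \<forall>c\<in>{..\<sigma> k0}. \<bar>m i c\<bar> \<le> \<tau>"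
  proof (intro eventually_ball_finite ballI)
    show "\<forall>\<^sub>F i in sequentially. \<bar>m i c\<bar> \<le> \<tau>" for c
      using tendstoD[OF columns[of c] \<open>\<tau> > 0\<close>] by (auto simp: dist_real_def elim: eventually_mono)
  qed simp
  then have "\<forall>\<^sub>F k in sequentially. \<forall>c\<in>{..\<sigma> k0}. \<bar>m (\<sigma> k) c\<bar> \<le> \<tau>"
    by (rule eventually_subseq[OF \<open>strict_mono \<sigma>\<close>])
  with near_limits eventually_gt_at_top[of k0]
  have "\<forall>\<^sub>F k in sequentially. (\<forall>r\<in>{..L}. \<bar>m r (\<sigma> k) - l r\<bar> < \<tau> / 2) \<and>
      (\<forall>c\<in>{..\<sigma> k0}. \<bar>m (\<sigma> k) c\<bar> \<le> \<tau>) \<and> k0 < k"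
    by (intro eventually_conj)
  then obtain k1 where k1: "\<forall>r\<le>L. \<bar>m r (\<sigma> k1) - l r\<bar> < \<tau> / 2"
      "\<forall>c\<le>\<sigma> k0. \<bar>m (\<sigma> k1) c\<bar> \<le> \<tau>" "k0 < k1"
    by (auto dest!: eventually_happens'[OF sequentially_bot])
  have "\<bar>m r (\<sigma> k0) - m r (\<sigma> k1)\<bar> \<le> \<tau>" if "r \<le> L" for r
    using k0(1)[rule_format, OF that] k1(1)[rule_format, OF that] by linarith
  moreover have "\<sigma> k0 < \<sigma> k1"
    using \<open>strict_mono \<sigma>\<close> \<open>k0 < k1\<close> by (rule strict_monoD)
  ultimately show ?thesis
    using k0(2) k1(2) by blast
qed

lemma gliding_hump_indices:
  fixes m :: "nat \<Rightarrow> nat \<Rightarrow> real"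
  assumes step: "\<And>n L. \<exists>x y. L < x \<and> x < y \<and> (\<forall>r\<le>L. \<bar>m r x - m r y\<bar> \<le> \<tau> n) \<and> (\<forall>c\<le>x. \<bar>m y c\<bar> \<le> \<tau> n)"
  shows "\<exists>a b. (\<forall>i. a i < b i) \<and> (\<forall>i. b i < a (Suc i)) \<and> (\<forall>i c. c \<le> a i \<longrightarrow> \<bar>m (b i) c\<bar> \<le> \<tau> i) \<and>
           (\<forall>i r. r \<le> b i \<longrightarrow> \<bar>m r (a (Suc i)) - m r (b (Suc i))\<bar> \<le> \<tau> (Suc i))"
proof -
  define P where "P n (p :: nat \<times> nat) \<longleftrightarrow> fst p < snd p \<and> (\<forall>c\<le>fst p. \<bar>m (snd p) c\<bar> \<le> \<tau> n)" for n p
  define Q where "Q n (p :: nat \<times> nat) (p' :: nat \<times> nat) \<longleftrightarrow> snd p < fst p' \<and>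
      (\<forall>r\<le>snd p. \<bar>m r (fst p') - m r (snd p')\<bar> \<le> \<tau> (Suc n))" for n p p'
  have "\<exists>p. \<forall>n. P n (p n) \<and> Q n (p n) (p (Suc n))"
  proof (rule dependent_nat_choice)
    show "\<exists>p. P 0 p"
      using step[where n = 0 and L = 0] unfolding P_def by auto
    show "\<exists>p'. P (Suc n) p' \<and> Q n p p'" for p n
      using step[where n = "Suc n" and L = "snd p"] unfolding P_def Q_def by auto
  qed
  then obtain p where "\<And>n. P n (p n)" "\<And>n. Q n (p n) (p (Suc n))"
    by blast
  then show ?thesis
    unfolding P_def Q_def by (intro exI[of _ "fst \<circ> p"] exI[of _ "snd \<circ> p"]) auto
qed

lemma gliding_hump_estimates:
  fixes m :: "nat \<Rightarrow> nat \<Rightarrow> real"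
  assumes "\<forall>i. a i < b i" and "\<forall>i. b i < a (Suc i)"
    and "\<forall>i c. c \<le> a i \<longrightarrow> \<bar>m (b i) c\<bar> \<le> \<tau> i"
    and "\<forall>i r. r \<le> b i \<longrightarrow> \<bar>m r (a (Suc i)) - m r (b (Suc i))\<bar> \<le> \<tau> (Suc i)"
  shows "strict_mono a" and "strict_mono b" and "\<bar>m (b i) (a i)\<bar> \<le> \<tau> i"
    and "i < j \<Longrightarrow> \<bar>m (b i) (a j) - m (b i) (b j)\<bar> \<le> \<tau> j"
    and "j < i \<Longrightarrow> \<bar>m (b i) (a j) - m (b i) (b j)\<bar> \<le> 2 * \<tau> i"
proof -
  note interleaved = assms(1,2)[rule_format]
    and columns_small = assms(3)[rule_format] and rows_close = assms(4)[rule_format]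
  show a: "strict_mono a" and b: "strict_mono b"
    using interleaved by (auto intro!: strict_monoI_Suc intro: less_trans)
  show "\<bar>m (b i) (a i)\<bar> \<le> \<tau> i"
    by (rule columns_small) simp
  show "\<bar>m (b i) (a j) - m (b i) (b j)\<bar> \<le> \<tau> j" if "i < j"
  proof -
    obtain j' where j': "j = Suc j'"
      using \<open>i < j\<close> less_imp_Suc_add by blast
    have "b i \<le> b j'"
      using \<open>i < j\<close> j' b by (simp add: strict_mono_less_eq)
    then show ?thesis
      using rows_close j' by simp
  qed
  show "\<bar>m (b i) (a j) - m (b i) (b j)\<bar> \<le> 2 * \<tau> i" if "j < i"
  proof -
    have "a (Suc j) \<le> a i"
      using \<open>j < i\<close> a by (simp add: strict_mono_less_eq)
    then have "a j \<le> a i" "b j \<le> a i"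
      using interleaved[of j] by linarith+
    then have "\<bar>m (b i) (a j)\<bar> \<le> \<tau> i" "\<bar>m (b i) (b j)\<bar> \<le> \<tau> i"
      using columns_small by blast+
    then show ?thesis
      by linarith
  qed
qed

lemma gliding_hump:
  fixes m :: "nat \<Rightarrow> nat \<Rightarrow> real"
  assumes bounded: "\<And>i k. \<bar>m i k\<bar> \<le> K" and columns: "\<And>k. (\<lambda>i. m i k) \<longlonglongrightarrow> 0"
    and "\<epsilon> > 0"
  shows "\<exists>a b. strict_mono a \<and> strict_mono b \<and> (\<forall>i. \<bar>m (b i) (a i)\<bar> \<le> \<epsilon>) \<and>
           (\<forall>i j. i \<noteq> j \<longrightarrow> \<bar>m (b i) (a j) - m (b i) (b j)\<bar> \<le> \<epsilon> / 2 ^ (i + j))"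
proof -
  obtain \<sigma> where \<sigma>: "strict_mono \<sigma>" "\<And>r. convergent (\<lambda>k. m r (\<sigma> k))"
    using diagonal_subseq_rows_convergent[of m K, OF bounded] by blast
  \<comment> \<open>chosen so that \<tau> j \<le> \<epsilon> / 2^(i+j) for i < j and 2 \<tau> i \<le> \<epsilon> / 2^(i+j) for j < i\<close>
  define \<tau> where "\<tau> n = \<epsilon> / 2 ^ (2 * n + 1)" for n
  have "\<exists>x y. L < x \<and> x < y \<and> (\<forall>r\<le>L. \<bar>m r x - m r y\<bar> \<le> \<tau> n) \<and> (\<forall>c\<le>x. \<bar>m y c\<bar> \<le> \<tau> n)"
    for n L
    using \<open>\<epsilon> > 0\<close> by (intro gliding_hump_step[OF \<sigma> columns]) (simp add: \<tau>_def)
  from gliding_hump_indices[of m \<tau>, OF this] obtain a b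
    where "\<forall>i. a i < b i" and "\<forall>i. b i < a (Suc i)" and "\<forall>i c. c \<le> a i \<longrightarrow> \<bar>m (b i) c\<bar> \<le> \<tau> i"
      and "\<forall>i r. r \<le> b i \<longrightarrow> \<bar>m r (a (Suc i)) - m r (b (Suc i))\<bar> \<le> \<tau> (Suc i)"
    by blast
  note estimates = gliding_hump_estimates[OF this]
  have \<tau>_le: "\<tau> n \<le> \<epsilon> / 2 ^ k" if "k \<le> 2 * n + 1" for n k
    unfolding \<tau>_def using \<open>\<epsilon> > 0\<close> that by (intro divide_left_mono power_increasing) auto
  have "\<bar>m (b i) (a j) - m (b i) (b j)\<bar> \<le> \<epsilon> / 2 ^ (i + j)" if "i \<noteq> j" for i j
  proof (cases "i < j")
    case True
    then show ?thesis
      using estimates(4)[OF True] \<tau>_le[where n = j and k = "i + j"] by simp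
  next
    case False
    with that have "j < i" by simp
    have "2 * \<tau> i \<le> \<epsilon> / 2 ^ (i + j)"
      using \<open>\<epsilon> > 0\<close> \<open>j < i\<close> unfolding \<tau>_def by (simp add: divide_left_mono power_increasing)
    then show ?thesis
      using estimates(5)[OF \<open>j < i\<close>] by simp
  qed
  moreover have "\<bar>m (b i) (a i)\<bar> \<le> \<epsilon>" for i
    using estimates(3)[of i] \<tau>_le[where n = i and k = 0] by simp
  ultimately show ?thesis
    using estimates(1,2) by blast
qed

section \<open>Almost diagonal matrices\<close>

lemma abs_suminf_off_diagonal_le:
  fixes M :: "nat \<Rightarrow> nat \<Rightarrow> real" and x :: "nat \<Rightarrow> real"
  assumes off_diagonal: "\<And>j. i \<noteq> j \<Longrightarrow> \<bar>M i j\<bar> \<le> \<epsilon> / 2 ^ (i + j)"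
    and bounded: "\<And>j. \<bar>x j\<bar> \<le> K"
  shows "\<bar>(\<Sum>j. x j * M i j) - x i * M i i\<bar> \<le> 2 * K * \<epsilon> / 2 ^ i"
proof -
  define h where "h j = (if j = i then 0 else x j * M i j)" for j
  have "0 \<le> K"
    using bounded[of 0] by linarith
  have "0 \<le> \<epsilon> / 2 ^ (i + Suc i)"
    using off_diagonal[of "Suc i"] abs_ge_zero[of "M i (Suc i)"] by linarith
  then have "0 \<le> \<epsilon>"
    using mult_nonneg_nonneg[of "\<epsilon> / 2 ^ (i + Suc i)" "2 ^ (i + Suc i)"] by simp
  have h_le: "\<bar>h j\<bar> \<le> K * \<epsilon> / 2 ^ i * (1 / 2) ^ j" for j
  proof (cases "j = i")
    case True
    then show ?thesis
      using \<open>0 \<le> K\<close> \<open>0 \<le> \<epsilon>\<close> by (simp add: h_def)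
  next
    case False
    then have "\<bar>h j\<bar> = \<bar>x j\<bar> * \<bar>M i j\<bar>"
      by (simp add: h_def abs_mult)
    also have "\<dots> \<le> K * (\<epsilon> / 2 ^ (i + j))"
      using bounded[of j] off_diagonal[of j] False \<open>0 \<le> K\<close> by (intro mult_mono) auto
    finally show ?thesis
      by (simp add: power_add power_one_over)
  qed
  have geometric: "(\<lambda>j. K * \<epsilon> / 2 ^ i * (1 / 2) ^ j) sums (2 * K * \<epsilon> / 2 ^ i)"
    using sums_mult[OF geometric_sums[of "1 / 2 :: real"], of "K * \<epsilon> / 2 ^ i"] by (simp add: mult_ac)
  have "summable h"
    by (rule summable_comparison_test'[OF sums_summable[OF geometric]]) (use h_le in simp)
  have "(\<lambda>j. h j + (if j = i then x i * M i i else 0)) sums (suminf h + x i * M i i)"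
    using summable_sums[OF \<open>summable h\<close>] sums_single by (rule sums_add)
  moreover have "(\<lambda>j. h j + (if j = i then x i * M i i else 0)) = (\<lambda>j. x j * M i j)"
    by (auto simp: h_def)
  ultimately have "(\<Sum>j. x j * M i j) - x i * M i i = suminf h"
    by (simp add: sums_iff)
  also have "\<bar>\<dots>\<bar> \<le> 2 * K * \<epsilon> / 2 ^ i"
    using norm_suminf_le[of h] h_le sums_summable[OF geometric] sums_unique[OF geometric] by simp
  finally show ?thesis .
qed

lemma almost_diagonal_row_estimate:
  fixes M :: "nat \<Rightarrow> nat \<Rightarrow> real" and x :: "nat \<Rightarrow> real"
  assumes diagonal: "\<delta> \<le> \<bar>M i i\<bar>" and "0 < \<delta>"
    and off_diagonal: "\<And>j. i \<noteq> j \<Longrightarrow> \<bar>M i j\<bar> \<le> \<epsilon> / 2 ^ (i + j)"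
    and bounded: "\<And>j. \<bar>x j\<bar> \<le> K"
  shows "\<bar>(\<Sum>j. x j * M i j) / M i i - x i\<bar> \<le> 2 * K * \<epsilon> / \<delta> * (1 / 2) ^ i"
proof -
  have "M i i \<noteq> 0"
    using diagonal \<open>0 < \<delta>\<close> by auto
  then have "\<bar>(\<Sum>j. x j * M i j) / M i i - x i\<bar> = \<bar>(\<Sum>j. x j * M i j) - x i * M i i\<bar> / \<bar>M i i\<bar>"
    by (simp add: field_simps)
  also have "\<dots> \<le> (2 * K * \<epsilon> / 2 ^ i) / \<delta>"
  proof (rule frac_le)
    show "\<bar>(\<Sum>j. x j * M i j) - x i * M i i\<bar> \<le> 2 * K * \<epsilon> / 2 ^ i"
      by (rule abs_suminf_off_diagonal_le) (use off_diagonal bounded in auto)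
    then show "0 \<le> 2 * K * \<epsilon> / 2 ^ i"
      by (meson abs_ge_zero order_trans)
  qed (use diagonal \<open>0 < \<delta>\<close> in auto)
  also have "\<dots> = 2 * K * \<epsilon> / \<delta> * (1 / 2) ^ i"
    by (simp add: power_one_over)
  finally show ?thesis .
qed

section \<open>Normalized Schauder bases and their operators\<close>

locale normalized_basis =
  fixes e :: "nat \<Rightarrow> 'a::banach"
  assumes schauder: "schauder_basis e" and normalized: "normalized e"
begin

lemma norm_basis [simp]: "norm (e j) = 1"
  using normalized unfolding normalized_def by blast

lemma biorth_sums: "(\<lambda>j. biorth e j x *\<^sub>R e j) sums x"
proof -
  have "\<exists>!a. (\<lambda>j. a j *\<^sub>R e j) sums x"
    using schauder unfolding schauder_basis_def by blast
  from theI'[OF this] show ?thesis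
    unfolding biorth_def .
qed

lemma biorth_eqI:
  assumes "(\<lambda>j. a j *\<^sub>R e j) sums x"
  shows "biorth e j x = a j"
proof -
  have "\<exists>!a. (\<lambda>j. a j *\<^sub>R e j) sums x"
    using schauder unfolding schauder_basis_def by blast
  then have "(THE a. (\<lambda>j. a j *\<^sub>R e j) sums x) = a"
    using assms by (rule the1_equality[of "\<lambda>a. (\<lambda>j. a j *\<^sub>R e j) sums x"])
  then show ?thesis
    unfolding biorth_def by simp
qed

lemma biorth_suminf:
  assumes "summable (\<lambda>j. a j *\<^sub>R e j)"
  shows "biorth e j (\<Sum>j. a j *\<^sub>R e j) = a j"
  using assms by (intro biorth_eqI) (rule summable_sums)

lemma linear_biorth: "linear (biorth e j)"
proof (rule linearI)
  show "biorth e j (x + y) = biorth e j x + biorth e j y" for x y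
    using sums_add[OF biorth_sums[of x] biorth_sums[of y]]
    by (intro biorth_eqI) (simp add: scaleR_add_left)
  show "biorth e j (r *\<^sub>R x) = r *\<^sub>R biorth e j x" for r x
    using sums_scaleR_right[OF biorth_sums[of x], of r]
    by (intro biorth_eqI) simp
qed

lemma biorth_diff: "biorth e j (x - y) = biorth e j x - biorth e j y"
  using linear_biorth by (rule linear_diff)

lemma biorth_scaleR: "biorth e j (r *\<^sub>R x) = r * biorth e j x"
  using linear_scale[OF linear_biorth] by simp

lemma biorth_tendsto_zero: "(\<lambda>j. biorth e j x) \<longlonglongrightarrow> 0"
proof -
  have "(\<lambda>j. biorth e j x *\<^sub>R e j) \<longlonglongrightarrow> 0"
    by (rule summable_LIMSEQ_zero[OF sums_summable[OF biorth_sums]])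
  then have "(\<lambda>j. norm (biorth e j x *\<^sub>R e j)) \<longlonglongrightarrow> 0"
    by (rule tendsto_norm_zero)
  then show ?thesis
    by (simp add: tendsto_rabs_zero_iff)
qed

lemma norm_le_suminf_biorth:
  assumes "\<And>j. \<bar>biorth e j x\<bar> \<le> f j" and "summable f"
  shows "norm x \<le> suminf f"
proof -
  have "norm (\<Sum>j. biorth e j x *\<^sub>R e j) \<le> suminf f"
    by (rule norm_suminf_le) (use assms in simp_all)
  then show ?thesis
    using biorth_sums[of x] by (simp add: sums_iff)
qed

definition spread :: "(nat \<Rightarrow> nat) \<Rightarrow> 'a \<Rightarrow> 'a" where
  "spread \<sigma> x = (\<Sum>j. biorth e j x *\<^sub>R e (\<sigma> j))"

definition compress :: "(nat \<Rightarrow> nat) \<Rightarrow> 'a \<Rightarrow> 'a" where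
  "compress \<sigma> x = (\<Sum>j. biorth e (\<sigma> j) x *\<^sub>R e j)"

definition multiplier :: "(nat \<Rightarrow> real) \<Rightarrow> 'a \<Rightarrow> 'a" where
  "multiplier \<gamma> x = (\<Sum>j. (\<gamma> j * biorth e j x) *\<^sub>R e j)"

end

locale unconditional_basis = normalized_basis +
  fixes Cu :: real
  assumes unconditional: "unconditional Cu e"
begin

lemma one_le_Cu: "1 \<le> Cu"
proof -
  let ?a = "\<lambda>j. if j = 0 then 1 else 0"
  have sums: "(\<lambda>j. ?a j *\<^sub>R e j) sums e 0"
    using sums_restrict_atLeastLessThan[of 0 1 "\<lambda>_. 1" e] by simp
  with unconditional[unfolded unconditional_def, rule_format, of ?a "\<lambda>_. 1"] show ?thesis
    by (simp add: sums_iff sums_summable)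
qed

lemma unconditionalD:
  assumes "summable (\<lambda>j. a j *\<^sub>R e j)" and "summable (\<lambda>j. (\<gamma> j * a j) *\<^sub>R e j)"
    and "\<And>j. \<bar>\<gamma> j\<bar> \<le> G"
  shows "norm (\<Sum>j. (\<gamma> j * a j) *\<^sub>R e j) \<le> Cu * G * norm (\<Sum>j. a j *\<^sub>R e j)"
proof -
  have "bdd_above (range (\<lambda>k. \<bar>\<gamma> k\<bar>))"
    using assms(3) by (intro bdd_aboveI[where M = G]) auto
  then have "norm (\<Sum>j. (\<gamma> j * a j) *\<^sub>R e j) \<le> Cu * (SUP k. \<bar>\<gamma> k\<bar>) * norm (\<Sum>j. a j *\<^sub>R e j)"
    using unconditional assms(1,2) unfolding unconditional_def by blast
  also have "\<dots> \<le> Cu * G * norm (\<Sum>j. a j *\<^sub>R e j)"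
    using assms(3) one_le_Cu by (intro mult_right_mono mult_left_mono cSUP_least) auto
  finally show ?thesis .
qed

lemma norm_sum_multiplier_le:
  assumes "\<And>j. \<bar>\<gamma> j\<bar> \<le> G"
  shows "norm (\<Sum>j\<in>{m..<n}. (\<gamma> j * a j) *\<^sub>R e j) \<le> Cu * G * norm (\<Sum>j\<in>{m..<n}. a j *\<^sub>R e j)"
proof -
  let ?a = "\<lambda>j. if j \<in> {m..<n} then a j else 0"
  have a: "(\<lambda>j. ?a j *\<^sub>R e j) sums (\<Sum>j\<in>{m..<n}. a j *\<^sub>R e j)"
    by (rule sums_restrict_atLeastLessThan)
  have "(\<lambda>j. (\<gamma> j * ?a j) *\<^sub>R e j) = (\<lambda>j. (if j \<in> {m..<n} then \<gamma> j * a j else 0) *\<^sub>R e j)"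
    by (auto simp: fun_eq_iff)
  then have \<gamma>a: "(\<lambda>j. (\<gamma> j * ?a j) *\<^sub>R e j) sums (\<Sum>j\<in>{m..<n}. (\<gamma> j * a j) *\<^sub>R e j)"
    using sums_restrict_atLeastLessThan[of m n "\<lambda>j. \<gamma> j * a j" e] by simp
  show ?thesis
    using unconditionalD[OF sums_summable[OF a] sums_summable[OF \<gamma>a] assms] a \<gamma>a
    by (simp add: sums_iff)
qed

lemma summable_multiplier:
  assumes "summable (\<lambda>j. a j *\<^sub>R e j)" and "\<And>j. \<bar>\<gamma> j\<bar> \<le> G"
  shows "summable (\<lambda>j. (\<gamma> j * a j) *\<^sub>R e j)"
  using norm_sum_multiplier_le[OF assms(2)] assms(1) by (rule summable_if_block_sums_dominated)

lemma norm_multiplier_le: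
  assumes "\<And>j. \<bar>\<gamma> j\<bar> \<le> G"
  shows "norm (multiplier \<gamma> x) \<le> Cu * G * norm x"
proof -
  have "summable (\<lambda>j. biorth e j x *\<^sub>R e j)"
    by (rule sums_summable[OF biorth_sums])
  then have "norm (multiplier \<gamma> x) \<le> Cu * G * norm (\<Sum>j. biorth e j x *\<^sub>R e j)"
    unfolding multiplier_def using assms by (intro unconditionalD summable_multiplier)
  then show ?thesis
    using biorth_sums[of x] by (simp add: sums_iff)
qed

lemma bounded_linear_multiplier:
  assumes "\<And>j. \<bar>\<gamma> j\<bar> \<le> G"
  shows "bounded_linear (multiplier \<gamma>)"
  unfolding multiplier_def
proof (rule bounded_linear_series)
  show "linear (\<lambda>x. \<gamma> j * biorth e j x)" for j
    using linear_biorth by (simp add: linear_iff algebra_simps)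
  show "summable (\<lambda>j. (\<gamma> j * biorth e j x) *\<^sub>R e j)" for x
    using sums_summable[OF biorth_sums] assms by (rule summable_multiplier)
  show "norm (\<Sum>j. (\<gamma> j * biorth e j x) *\<^sub>R e j) \<le> Cu * G * norm x" for x
    using norm_multiplier_le[OF assms] unfolding multiplier_def .
qed

lemma biorth_multiplier:
  assumes "\<And>j. \<bar>\<gamma> j\<bar> \<le> G"
  shows "biorth e j (multiplier \<gamma> x) = \<gamma> j * biorth e j x"
  unfolding multiplier_def
  using sums_summable[OF biorth_sums] assms by (intro biorth_suminf summable_multiplier)

lemma abs_biorth_le: "\<bar>biorth e j x\<bar> \<le> Cu * norm x"
proof -
  let ?\<gamma> = "\<lambda>k. if k = j then 1 else 0"
  have "(\<lambda>k. (?\<gamma> k * biorth e k x) *\<^sub>R e k) = (\<lambda>k. if k = j then biorth e k x *\<^sub>R e k else 0)"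
    by (auto simp: fun_eq_iff)
  then have "(\<lambda>k. (?\<gamma> k * biorth e k x) *\<^sub>R e k) sums (biorth e j x *\<^sub>R e j)"
    using sums_single[of j "\<lambda>k. biorth e k x *\<^sub>R e k"] by simp
  then have "multiplier ?\<gamma> x = biorth e j x *\<^sub>R e j"
    unfolding multiplier_def by (simp add: sums_iff)
  then show ?thesis
    using norm_multiplier_le[of ?\<gamma> 1 x] by simp
qed

lemma bounded_linear_biorth: "bounded_linear (biorth e j)"
proof (rule bounded_linear_intro[where K = Cu])
  show "biorth e j (x + y) = biorth e j x + biorth e j y" for x y
    using linear_biorth by (rule linear_add)
  show "biorth e j (r *\<^sub>R x) = r *\<^sub>R biorth e j x" for r x
    using linear_biorth by (rule linear_scale)
  show "norm (biorth e j x) \<le> norm x * Cu" for x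
    using abs_biorth_le by (simp add: mult.commute)
qed

end

locale spreading_basis = normalized_basis +
  fixes Cs :: real
  assumes spreading: "spreading Cs e"
begin

lemma one_le_Cs: "1 \<le> Cs"
proof -
  let ?a = "\<lambda>j. if j = 0 then 1 else 0"
  have "(\<lambda>j. ?a j *\<^sub>R e j) sums e 0"
    using sums_restrict_atLeastLessThan[of 0 1 "\<lambda>_. 1" e] by simp
  with spreading[unfolded spreading_def, rule_format, of id ?a] show ?thesis
    by (simp add: sums_iff sums_summable strict_mono_id)
qed

lemma spreadingD:
  assumes "strict_mono \<sigma>" and "summable (\<lambda>j. a j *\<^sub>R e j)" and "summable (\<lambda>j. a j *\<^sub>R e (\<sigma> j))"
  shows "norm (\<Sum>j. a j *\<^sub>R e (\<sigma> j)) \<le> Cs * norm (\<Sum>j. a j *\<^sub>R e j)"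
    and "norm (\<Sum>j. a j *\<^sub>R e j) \<le> Cs * norm (\<Sum>j. a j *\<^sub>R e (\<sigma> j))"
proof -
  have "inverse Cs * norm (\<Sum>j. a j *\<^sub>R e (\<sigma> j)) \<le> norm (\<Sum>j. a j *\<^sub>R e j) \<and>
      norm (\<Sum>j. a j *\<^sub>R e j) \<le> Cs * norm (\<Sum>j. a j *\<^sub>R e (\<sigma> j))"
    using spreading assms unfolding spreading_def by blast
  then show "norm (\<Sum>j. a j *\<^sub>R e (\<sigma> j)) \<le> Cs * norm (\<Sum>j. a j *\<^sub>R e j)"
    and "norm (\<Sum>j. a j *\<^sub>R e j) \<le> Cs * norm (\<Sum>j. a j *\<^sub>R e (\<sigma> j))"
    using one_le_Cs by (simp_all add: field_simps)
qed

lemma norm_sum_spread_le: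
  assumes "strict_mono \<sigma>"
  shows "norm (\<Sum>j\<in>{m..<n}. a j *\<^sub>R e (\<sigma> j)) \<le> Cs * norm (\<Sum>j\<in>{m..<n}. a j *\<^sub>R e j)"
    and "norm (\<Sum>j\<in>{m..<n}. a j *\<^sub>R e j) \<le> Cs * norm (\<Sum>j\<in>{m..<n}. a j *\<^sub>R e (\<sigma> j))"
proof -
  let ?a = "\<lambda>j. if j \<in> {m..<n} then a j else 0"
  have a: "(\<lambda>j. ?a j *\<^sub>R e j) sums (\<Sum>j\<in>{m..<n}. a j *\<^sub>R e j)"
    and a\<sigma>: "(\<lambda>j. ?a j *\<^sub>R e (\<sigma> j)) sums (\<Sum>j\<in>{m..<n}. a j *\<^sub>R e (\<sigma> j))"
    by (rule sums_restrict_atLeastLessThan)+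
  note spreadingD[OF assms sums_summable[OF a] sums_summable[OF a\<sigma>]]
  with a a\<sigma> show "norm (\<Sum>j\<in>{m..<n}. a j *\<^sub>R e (\<sigma> j)) \<le> Cs * norm (\<Sum>j\<in>{m..<n}. a j *\<^sub>R e j)"
    and "norm (\<Sum>j\<in>{m..<n}. a j *\<^sub>R e j) \<le> Cs * norm (\<Sum>j\<in>{m..<n}. a j *\<^sub>R e (\<sigma> j))"
    by (simp_all add: sums_iff)
qed

lemma summable_spread_iff:
  assumes "strict_mono \<sigma>"
  shows "summable (\<lambda>j. a j *\<^sub>R e (\<sigma> j)) \<longleftrightarrow> summable (\<lambda>j. a j *\<^sub>R e j)"
proof
  show "summable (\<lambda>j. a j *\<^sub>R e j)" if "summable (\<lambda>j. a j *\<^sub>R e (\<sigma> j))"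
    using norm_sum_spread_le(2)[OF assms] that by (rule summable_if_block_sums_dominated)
  show "summable (\<lambda>j. a j *\<^sub>R e (\<sigma> j))" if "summable (\<lambda>j. a j *\<^sub>R e j)"
    using norm_sum_spread_le(1)[OF assms] that by (rule summable_if_block_sums_dominated)
qed

lemma summable_spread:
  assumes "strict_mono \<sigma>"
  shows "summable (\<lambda>j. biorth e j x *\<^sub>R e (\<sigma> j))"
  using sums_summable[OF biorth_sums] by (simp add: summable_spread_iff[OF assms])

lemma norm_spread_le:
  assumes "strict_mono \<sigma>"
  shows "norm (spread \<sigma> x) \<le> Cs * norm x"
  using spreadingD(1)[OF assms sums_summable[OF biorth_sums[of x]] summable_spread[OF assms]] biorth_sums[of x]
  unfolding spread_def by (simp add: sums_iff)

lemma bounded_linear_spread: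
  assumes "strict_mono \<sigma>"
  shows "bounded_linear (spread \<sigma>)"
  unfolding spread_def
  using linear_biorth summable_spread[OF assms] norm_spread_le[OF assms, unfolded spread_def]
  by (rule bounded_linear_series)

lemma norm_spread_diff_le:
  assumes "strict_mono a" and "strict_mono b"
  shows "norm (spread a x - spread b x) \<le> 2 * Cs * norm x"
  using norm_triangle_ineq4[of "spread a x" "spread b x"] norm_spread_le[OF assms(1), of x]
    norm_spread_le[OF assms(2), of x] by linarith

end

locale subsymmetric_basis = unconditional_basis e Cu + spreading_basis e Cs
  for e :: "nat \<Rightarrow> 'a::banach" and Cu Cs :: real
begin

lemma
  assumes "strict_mono \<sigma>"
  shows summable_compress: "summable (\<lambda>j. biorth e (\<sigma> j) x *\<^sub>R e j)"
    and norm_compress_le: "norm (compress \<sigma> x) \<le> Cs * Cu * norm x"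
proof -
  \<comment> \<open>multiplying by the indicator of range \<sigma> gives \<Sum>j. biorth e (\<sigma> j) x *R e (\<sigma> j),
    which spreading compares with compress \<sigma> x\<close>
  let ?\<gamma> = "\<lambda>k. of_bool (k \<in> range \<sigma>) :: real"
  have \<gamma>: "\<bar>?\<gamma> k\<bar> \<le> 1" for k
    by simp
  have "(\<lambda>k. (?\<gamma> k * biorth e k x) *\<^sub>R e k) sums multiplier ?\<gamma> x"
    unfolding multiplier_def using sums_summable[OF biorth_sums] \<gamma>
    by (intro summable_sums summable_multiplier)
  then have sums: "(\<lambda>j. biorth e (\<sigma> j) x *\<^sub>R e (\<sigma> j)) sums multiplier ?\<gamma> x"
    using sums_mono_reindex[OF assms, of "\<lambda>k. (?\<gamma> k * biorth e k x) *\<^sub>R e k"] by simp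
  then show summable: "summable (\<lambda>j. biorth e (\<sigma> j) x *\<^sub>R e j)"
    using sums_summable[OF sums] by (simp add: summable_spread_iff[OF assms])
  have "norm (compress \<sigma> x) \<le> Cs * norm (multiplier ?\<gamma> x)"
    using spreadingD(2)[OF assms summable sums_summable[OF sums]] sums
    unfolding compress_def by (simp add: sums_iff)
  also have "\<dots> \<le> Cs * (Cu * 1 * norm x)"
    using one_le_Cs norm_multiplier_le[OF \<gamma>] by (intro mult_left_mono) auto
  finally show "norm (compress \<sigma> x) \<le> Cs * Cu * norm x"
    by (simp add: mult.assoc)
qed

lemma bounded_linear_compress:
  assumes "strict_mono \<sigma>"
  shows "bounded_linear (compress \<sigma>)"
  unfolding compress_def
  using linear_biorth summable_compress[OF assms] norm_compress_le[OF assms, unfolded compress_def]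
  by (rule bounded_linear_series)

lemma biorth_compress:
  assumes "strict_mono \<sigma>"
  shows "biorth e j (compress \<sigma> x) = biorth e (\<sigma> j) x"
  unfolding compress_def using summable_compress[OF assms] by (rule biorth_suminf)

lemma norm_multiplier_compress_le:
  assumes "strict_mono \<sigma>" and "\<And>j. \<bar>\<gamma> j\<bar> \<le> G"
  shows "norm (multiplier \<gamma> (compress \<sigma> y)) \<le> Cu ^ 2 * Cs * G * norm y"
proof -
  have "norm (multiplier \<gamma> (compress \<sigma> y)) \<le> Cu * G * norm (compress \<sigma> y)"
    using assms(2) by (rule norm_multiplier_le)
  also have "\<dots> \<le> Cu * G * (Cs * Cu * norm y)"
    using norm_compress_le[OF assms(1)] one_le_Cu assms(2)[of 0] by (intro mult_left_mono) auto
  finally show ?thesis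
    by (simp add: power2_eq_square mult_ac)
qed

end

section \<open>Factorization of the identity through T\<close>

context subsymmetric_basis
begin

lemma norm_diagonal_inverse_defect_le:
  fixes T :: "'a \<Rightarrow> 'a" and a b :: "nat \<Rightarrow> nat"
  defines "M \<equiv> \<lambda>i j. biorth e (b i) (T (e (a j) - e (b j)))"
  assumes T: "bounded_linear T" and a: "strict_mono a" and b: "strict_mono b"
    and diagonal: "\<And>i. \<delta> \<le> \<bar>M i i\<bar>" and "0 < \<delta>"
    and off_diagonal: "\<And>i j. i \<noteq> j \<Longrightarrow> \<bar>M i j\<bar> \<le> \<epsilon> / 2 ^ (i + j)"
  shows "norm (multiplier (\<lambda>i. 1 / M i i) (compress b (T (spread a x - spread b x))) - x)
           \<le> 4 * Cu * \<epsilon> / \<delta> * norm x"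
proof -
  interpret T: bounded_linear T by (rule T)
  let ?y = "multiplier (\<lambda>i. 1 / M i i) (compress b (T (spread a x - spread b x))) - x"
  have "(\<lambda>j. biorth e j x *\<^sub>R (e (a j) - e (b j))) sums (spread a x - spread b x)"
    using sums_diff[OF summable_sums[OF summable_spread[OF a]] summable_sums[OF summable_spread[OF b]]]
    unfolding spread_def by (simp add: scaleR_diff_right)
  then have "(\<lambda>j. biorth e (b i) (T (biorth e j x *\<^sub>R (e (a j) - e (b j)))))
      sums biorth e (b i) (T (spread a x - spread b x))" for i
    using bounded_linear.sums[OF bounded_linear_compose[OF bounded_linear_biorth T]] by (simp add: o_def)
  then have row: "biorth e (b i) (T (spread a x - spread b x)) = (\<Sum>j. biorth e j x * M i j)" for i
    by (simp add: M_def T.scaleR biorth_scaleR sums_iff)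
  have inverse_diagonal: "\<bar>1 / M i i\<bar> \<le> 1 / \<delta>" for i
    using diagonal[of i] \<open>0 < \<delta>\<close> by (simp add: frac_le)
  have "\<bar>biorth e i ?y\<bar> \<le> 2 * (Cu * norm x) * \<epsilon> / \<delta> * (1 / 2) ^ i" for i
  proof -
    have "biorth e i ?y = (\<Sum>j. biorth e j x * M i j) / M i i - biorth e i x"
      by (simp add: biorth_diff biorth_multiplier[OF inverse_diagonal] biorth_compress[OF b] row)
    also have "\<bar>\<dots>\<bar> \<le> 2 * (Cu * norm x) * \<epsilon> / \<delta> * (1 / 2) ^ i"
      using diagonal \<open>0 < \<delta>\<close> off_diagonal abs_biorth_le by (rule almost_diagonal_row_estimate)
    finally show ?thesis .
  qed
  then have "norm ?y \<le> (\<Sum>i. 2 * (Cu * norm x) * \<epsilon> / \<delta> * (1 / 2) ^ i)"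
    by (rule norm_le_suminf_biorth) (simp add: summable_geometric)
  also have "\<dots> = 2 * (Cu * norm x) * \<epsilon> / \<delta> * (\<Sum>i. (1 / 2) ^ i)"
    by (rule suminf_mult) (simp add: summable_geometric)
  also have "\<dots> = 4 * Cu * \<epsilon> / \<delta> * norm x"
    by (simp add: suminf_geometric)
  finally show ?thesis .
qed

lemma factorization_through_almost_diagonal:
  fixes T :: "'a \<Rightarrow> 'a" and a b :: "nat \<Rightarrow> nat"
  defines "M \<equiv> \<lambda>i j. biorth e (b i) (T (e (a j) - e (b j)))"
  assumes T: "bounded_linear T" and a: "strict_mono a" and b: "strict_mono b"
    and diagonal: "\<And>i. \<delta> \<le> \<bar>M i i\<bar>" and "0 < \<delta>"
    and off_diagonal: "\<And>i j. i \<noteq> j \<Longrightarrow> \<bar>M i j\<bar> \<le> \<epsilon> / 2 ^ (i + j)"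
    and small: "4 * Cu * \<epsilon> < \<delta>"
  shows "\<exists>A B :: 'a \<Rightarrow> 'a. bounded_linear A \<and> bounded_linear B \<and> (\<forall>x. A (T (B x)) = x) \<and>
           onorm A * onorm B \<le> 2 * Cu ^ 2 * Cs ^ 2 / (\<delta> - 4 * Cu * \<epsilon>)"
proof -
  define B where "B x = spread a x - spread b x" for x
  define A\<^sub>0 where "A\<^sub>0 y = multiplier (\<lambda>i. 1 / M i i) (compress b y)" for y
  have inverse_diagonal: "\<bar>1 / M i i\<bar> \<le> 1 / \<delta>" for i
    using diagonal[of i] \<open>0 < \<delta>\<close> by (simp add: frac_le)
  have B: "bounded_linear B"
    unfolding B_def using bounded_linear_spread[OF a] bounded_linear_spread[OF b]
    by (rule bounded_linear_sub)
  have norm_B: "onorm B \<le> 2 * Cs"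
    unfolding B_def using norm_spread_diff_le[OF a b] one_le_Cs by (intro onorm_bound) auto
  have A\<^sub>0: "bounded_linear A\<^sub>0"
    unfolding A\<^sub>0_def using bounded_linear_multiplier[OF inverse_diagonal] bounded_linear_compress[OF b]
    by (rule bounded_linear_compose)
  have norm_A\<^sub>0: "onorm A\<^sub>0 \<le> Cu ^ 2 * Cs * (1 / \<delta>)"
    unfolding A\<^sub>0_def using norm_multiplier_compress_le[OF b, of "\<lambda>i. 1 / M i i", OF inverse_diagonal]
      one_le_Cu one_le_Cs \<open>0 < \<delta>\<close>
    by (intro onorm_bound) auto
  define q where "q = 4 * Cu * \<epsilon> / \<delta>"
  have "0 \<le> \<epsilon> / 2 ^ (0 + 1)"
    using off_diagonal[of 0 1] abs_ge_zero[of "M 0 1"] by linarith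
  then have "0 \<le> q"
    unfolding q_def using one_le_Cu \<open>0 < \<delta>\<close> by simp
  moreover have "q < 1"
    unfolding q_def using small \<open>0 < \<delta>\<close> by simp
  moreover have "norm (A\<^sub>0 (T (B x)) - x) \<le> q * norm x" for x
    unfolding A\<^sub>0_def B_def M_def q_def
    using T a b diagonal[unfolded M_def] \<open>0 < \<delta>\<close> off_diagonal[unfolded M_def]
    by (rule norm_diagonal_inverse_defect_le)
  ultimately obtain A where A: "bounded_linear A" "\<forall>x. A (T (B x)) = x"
    and norm_A: "onorm A \<le> onorm A\<^sub>0 / (1 - q)"
    using factor_id_through_near_id[OF A\<^sub>0 T B] by blast
  have "onorm A * onorm B \<le> onorm A\<^sub>0 / (1 - q) * (2 * Cs)"
    using norm_A norm_B onorm_pos_le[OF A(1)] onorm_pos_le[OF B] by (rule mult_mono')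
  also have "\<dots> \<le> Cu ^ 2 * Cs * (1 / \<delta>) / (1 - q) * (2 * Cs)"
    using norm_A\<^sub>0 \<open>q < 1\<close> one_le_Cs by (intro mult_right_mono divide_right_mono) auto
  also have "\<dots> = 2 * Cu ^ 2 * Cs ^ 2 / (\<delta> - 4 * Cu * \<epsilon>)"
    unfolding q_def using small \<open>0 < \<delta>\<close> by (simp add: field_simps power2_eq_square)
  finally show ?thesis
    using A B by blast
qed

lemma factorization:
  fixes T :: "'a \<Rightarrow> 'a"
  assumes T: "bounded_linear T" and diagonal: "\<And>j. \<delta> \<le> \<bar>biorth e j (T (e j))\<bar>"
    and "0 < \<delta>" and "0 < \<eta>"
  shows "\<exists>A B :: 'a \<Rightarrow> 'a. bounded_linear A \<and> bounded_linear B \<and> (\<forall>x. A (T (B x)) = x) \<and>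
           onorm A * onorm B \<le> 2 * Cu ^ 2 * Cs ^ 2 / \<delta> + \<eta>"
proof -
  interpret T: bounded_linear T by (rule T)
  obtain \<epsilon> where "0 < \<epsilon>" and small: "(1 + 4 * Cu) * \<epsilon> < \<delta>"
    and close: "2 * Cu ^ 2 * Cs ^ 2 / (\<delta> - (1 + 4 * Cu) * \<epsilon>) < 2 * Cu ^ 2 * Cs ^ 2 / \<delta> + \<eta>"
    using ex_pos_perturbed_divide_less[OF \<open>0 < \<delta>\<close> \<open>0 < \<eta>\<close>] by blast
  define m where "m i k = biorth e i (T (e k))" for i k
  have "\<bar>m i k\<bar> \<le> Cu * onorm T" for i k
  proof -
    have "\<bar>m i k\<bar> \<le> Cu * norm (T (e k))"
      unfolding m_def by (rule abs_biorth_le)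
    also have "\<dots> \<le> Cu * onorm T"
      using onorm[OF T, of "e k"] one_le_Cu by (intro mult_left_mono) auto
    finally show ?thesis .
  qed
  moreover have "(\<lambda>i. m i k) \<longlonglongrightarrow> 0" for k
    unfolding m_def by (rule biorth_tendsto_zero)
  ultimately obtain a b where a: "strict_mono a" and b: "strict_mono b"
    and hump: "\<And>i. \<bar>m (b i) (a i)\<bar> \<le> \<epsilon>"
    and off_diagonal: "\<And>i j. i \<noteq> j \<Longrightarrow> \<bar>m (b i) (a j) - m (b i) (b j)\<bar> \<le> \<epsilon> / 2 ^ (i + j)"
    using gliding_hump[of m "Cu * onorm T" \<epsilon>] \<open>0 < \<epsilon>\<close> by blast
  have M: "biorth e (b i) (T (e (a j) - e (b j))) = m (b i) (a j) - m (b i) (b j)" for i j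
    by (simp add: m_def T.diff biorth_diff)
  have diagonal_block: "\<delta> - \<epsilon> \<le> \<bar>biorth e (b i) (T (e (a i) - e (b i)))\<bar>" for i
    using diagonal[of "b i"] hump[of i] unfolding M m_def by linarith
  have "0 \<le> Cu * \<epsilon>"
    using one_le_Cu \<open>0 < \<epsilon>\<close> by simp
  with small have "0 < \<delta> - \<epsilon>" and "4 * Cu * \<epsilon> < \<delta> - \<epsilon>"
    by (simp_all add: algebra_simps)
  then obtain A B :: "'a \<Rightarrow> 'a" where AB: "bounded_linear A" "bounded_linear B" "\<forall>x. A (T (B x)) = x"
    and norm_AB: "onorm A * onorm B \<le> 2 * Cu ^ 2 * Cs ^ 2 / (\<delta> - \<epsilon> - 4 * Cu * \<epsilon>)"
    using factorization_through_almost_diagonal[OF T a b diagonal_block] off_diagonal unfolding M by blast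
  have "\<delta> - \<epsilon> - 4 * Cu * \<epsilon> = \<delta> - (1 + 4 * Cu) * \<epsilon>"
    by (simp add: algebra_simps)
  with norm_AB close have "onorm A * onorm B \<le> 2 * Cu ^ 2 * Cs ^ 2 / \<delta> + \<eta>"
    by simp
  with AB show ?thesis
    by blast
qed

end

theorem theorem2p1:
  fixes e :: "nat \<Rightarrow> 'a::banach" and T :: "'a \<Rightarrow> 'a" and Cu Cs \<delta> :: real
  assumes "schauder_basis e" and "normalized e" and "subsymmetric Cu Cs e"
    and "bounded_linear T"
    and "\<delta> = (INF j. \<bar>biorth e j (T (e j))\<bar>)" and "\<delta> > 0"
  shows "\<forall>\<eta>>0. \<exists>A B :: 'a \<Rightarrow> 'a. bounded_linear A \<and> bounded_linear B \<and>
           (\<forall>x. A (T (B x)) = x) \<and>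
           onorm A * onorm B \<le> 2 * Cu ^ 5 * Cs ^ 3 / \<delta> + \<eta>"
proof (intro allI impI)
  fix \<eta> :: real
  assume "\<eta> > 0"
  interpret subsymmetric_basis e Cu Cs
    using assms(1-3) unfolding subsymmetric_def by unfold_locales auto
  have "\<delta> \<le> \<bar>biorth e j (T (e j))\<bar>" for j
    unfolding assms(5) by (rule cINF_lower) (auto intro: bdd_belowI[where m = 0])
  then obtain A B :: "'a \<Rightarrow> 'a" where "bounded_linear A" "bounded_linear B" "\<forall>x. A (T (B x)) = x"
    and "onorm A * onorm B \<le> 2 * Cu ^ 2 * Cs ^ 2 / \<delta> + \<eta>"
    using factorization[OF assms(4) _ assms(6) \<open>\<eta> > 0\<close>] by blast
  moreover have "2 * Cu ^ 2 * Cs ^ 2 / \<delta> \<le> 2 * Cu ^ 5 * Cs ^ 3 / \<delta>"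
    using one_le_Cu one_le_Cs assms(6)
    by (intro divide_right_mono mult_mono power_increasing mult_left_mono) auto
  ultimately show "\<exists>A B :: 'a \<Rightarrow> 'a. bounded_linear A \<and> bounded_linear B \<and> (\<forall>x. A (T (B x)) = x) \<and>
      onorm A * onorm B \<le> 2 * Cu ^ 5 * Cs ^ 3 / \<delta> + \<eta>"
    by fastforce
qed

end
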